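(* With $k(c)$ as defined below, $\dfrac{1}{k(c)}\log\left|r_1(c)r_2(c)\cdots r_{k(c)}(c)\right|\to\log 2$ as $c\to-2$, $c<-2$.
   Context: For real $c<-2$ let $f_c(z)=z^2+c$ and $r_n(c)=f_c^{\circ n}(0)$, so $r_1(c)=c$ and $r_{n+1}(c)=r_n(c)^2+c$. For $-3<c<-2$, $k(c)$ denotes the smallest positive integer $k$ such that $r_{k+1}(c)/r_k(c)\ge 36$. *)

theory Defs
  imports Complex_Main
begin

text \<open>Orbit of the critical point: r n c = f_c^n(0), with f_c(z) = z^2 + c.
  Thus r 0 c = 0, r 1 c = c, r (n+1) c = (r n c)^2 + c.\<close>
fun r :: "nat \<Rightarrow> real \<Rightarrow> real" where
  "r 0 c = 0"
| "r (Suc n) c = (r n c)^2 + c"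

text \<open>k(c): smallest positive integer k with r_{k+1}(c) / r_k(c) \<ge> 36 (meaningful for -3 < c < -2).\<close>
definition kk :: "real \<Rightarrow> nat" where
  "kk c = (LEAST k. 0 < k \<and> r (Suc k) c / r k c \<ge> 36)"

end

theory Submission
  imports Defs
begin

text \<open>For \<open>c < -2\<close> every factor \<open>r\<^sub>i(c)\<close>, \<open>i \<ge> 1\<close>, has modulus at least 2, so the product
  is at least \<open>2\<^sup>k\<close>. Conversely, \<open>r\<^sub>i\<^sub>+\<^sub>1/r\<^sub>i = r\<^sub>i + c/r\<^sub>i\<close> differs from \<open>r\<^sub>i\<close> by less than 3/2,
  so \<open>r\<^sub>i < 75/2\<close> for \<open>2 \<le> i < k(c)\<close> and all factors are bounded. Once \<open>r\<^sub>i(c) \<ge> 2 + \<delta>\<close> with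
  \<open>\<delta> > -2 - c\<close>, the distance of the orbit to 2 at least triples at each step; hence, with
  \<open>3\<^sup>M\<delta> \<ge> 36\<close>, all factors but \<open>r\<^sub>1\<close> and the last \<open>M + 1\<close> lie in \<open>[2, 2 + \<delta>]\<close>. Since \<open>k(c) \<rightarrow> \<infinity>\<close>
  (the orbit of \<open>-2\<close> stays in \<open>[-2, 2]\<close>), the normalized logarithm is squeezed between \<open>ln 2\<close>
  and \<open>ln (2 + \<delta>) + O(M / k(c))\<close>.\<close>

lemma r_escape:
  assumes "0 \<le> \<delta>" "-2 - \<delta> < c" "2 + \<delta> \<le> r j c"
  shows "2 + 3^m * \<delta> \<le> r (j + m) c"
proof (induction m)
  case 0
  then show ?case using assms(3) by simp
next
  case (Suc m)
  define y where "y = r (j + m) c"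
  have "1 * \<delta> \<le> 3^m * \<delta>" using assms(1) by (intro mult_right_mono) auto
  then have "\<delta> * 1 \<le> (y - 2) * (y - 1)"
    using Suc assms(1) by (intro mult_mono) (auto simp: y_def)
  then have "2 + 3 * (y - 2) \<le> y^2 + c"
    using assms(2) by (simp add: algebra_simps power2_eq_square)
  then show ?case using Suc by (simp add: y_def)
qed

text \<open>Here \<open>r\<^sub>2(c) = c\<^sup>2 + c = 2 + (c + 2)(c - 1)\<close>.\<close>

lemma r_Suc_Suc_ge:
  assumes "c < -2"
  shows "2 + 3^m * ((c + 2) * (c - 1)) \<le> r (Suc (Suc m)) c"
proof -
  have "0 < c * (c + 2)" using assms by (intro mult_neg_neg) auto
  then have "2 + 3^m * ((c + 2) * (c - 1)) \<le> r (2 + m) c"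
    using assms by (intro r_escape) (auto simp: algebra_simps power2_eq_square numeral_2_eq_2)
  then show ?thesis by simp
qed

lemma r_ge_two:
  assumes "c < -2" "2 \<le> n"
  shows "2 \<le> r n c"
proof -
  obtain m where n: "n = Suc (Suc m)" using assms(2) by (metis add_2_eq_Suc le_Suc_ex add.commute)
  have "0 \<le> 3^m * ((c + 2) * (c - 1))" using assms(1) by (intro mult_nonneg_nonneg mult_nonpos_nonpos) auto
  then show ?thesis using r_Suc_Suc_ge[OF assms(1), of m] unfolding n by linarith
qed

lemma abs_r_ge_two:
  assumes "c < -2" "1 \<le> n"
  shows "2 \<le> \<bar>r n c\<bar>"
proof (cases "n = 1")
  case False
  then have "2 \<le> r n c" using assms by (intro r_ge_two) auto
  then show ?thesis by simp
qed (use assms in auto)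

lemma r_unbounded:
  assumes "c < -2"
  obtains n where "2 \<le> n" "B \<le> r n c"
proof -
  have d: "0 < (c + 2) * (c - 1)" using assms by (intro mult_neg_neg) auto
  obtain m :: nat where "B / ((c + 2) * (c - 1)) < 3^m" using real_arch_pow[of 3] by auto
  then have "B \<le> 3^m * ((c + 2) * (c - 1))" using d by (simp add: divide_less_eq)
  then show ?thesis using that[of "Suc (Suc m)"] r_Suc_Suc_ge[OF assms, of m] by simp
qed

lemma r_ratio_less:
  assumes "c < 0" "0 < r n c"
  shows "r (Suc n) c / r n c < r n c"
  using assms by (simp add: divide_less_eq power2_eq_square)

lemma r_ratio_ge:
  assumes "-3 < c" "2 \<le> r n c"
  shows "r n c - 3/2 \<le> r (Suc n) c / r n c"
proof -
  have "(r n c - 3/2) * r n c \<le> r n c ^ 2 + c"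
    using assms by (simp add: algebra_simps power2_eq_square)
  then show ?thesis using assms(2) by (simp add: le_divide_eq)
qed

lemma kk_spec:
  assumes "-3 < c" "c < -2"
  shows "0 < kk c" "36 \<le> r (Suc (kk c)) c / r (kk c) c"
proof -
  obtain n where n: "2 \<le> n" "40 \<le> r n c" using r_unbounded[OF assms(2)] .
  have "36 \<le> r (Suc n) c / r n c"
    using r_ratio_ge[OF assms(1), of n] n by linarith
  then have "\<exists>k. 0 < k \<and> 36 \<le> r (Suc k) c / r k c" using n(1) by (intro exI[of _ n]) auto
  then have "0 < kk c \<and> 36 \<le> r (Suc (kk c)) c / r (kk c) c"
    unfolding kk_def by (rule LeastI_ex)
  then show "0 < kk c" "36 \<le> r (Suc (kk c)) c / r (kk c) c" by auto
qed

lemma kk_minimal: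
  assumes "0 < j" "j < kk c"
  shows "r (Suc j) c / r j c < 36"
  using not_less_Least[of j "\<lambda>k. 0 < k \<and> 36 \<le> r (Suc k) c / r k c"] assms
  unfolding kk_def by auto

text \<open>At \<open>k = 1\<close> the ratio is \<open>c + 1 < 0\<close>.\<close>

lemma kk_ge_two:
  assumes "-3 < c" "c < -2"
  shows "2 \<le> kk c"
proof (rule ccontr)
  assume "\<not> 2 \<le> kk c"
  then have "kk c = 1" using kk_spec(1)[OF assms] by linarith
  then have "36 \<le> (c^2 + c) / c" using kk_spec(2)[OF assms] by simp
  moreover have "(c^2 + c) / c = c + 1" using assms by (simp add: field_simps power2_eq_square)
  ultimately show False using assms by simp
qed

lemma r_kk_ge:
  assumes "-3 < c" "c < -2"
  shows "36 \<le> r (kk c) c"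
proof -
  have "2 \<le> r (kk c) c" using kk_ge_two[OF assms] assms(2) by (intro r_ge_two)
  then show ?thesis using r_ratio_less[of c "kk c"] kk_spec(2)[OF assms] assms by simp
qed

lemma r_less_before_kk:
  assumes "-3 < c" "c < -2" "2 \<le> i" "i < kk c"
  shows "r i c < 75/2"
  using r_ratio_ge[OF assms(1) r_ge_two[OF assms(2,3)]] kk_minimal[of i c] assms by simp

lemma abs_r_le_upto_kk:
  assumes "-3 < c" "c < -2" "1 \<le> i" "i \<le> kk c"
  shows "\<bar>r i c\<bar> \<le> 1444"
proof -
  have small: "\<bar>r j c\<bar> \<le> 75/2" if "1 \<le> j" "j < kk c" for j
  proof (cases "j = 1")
    case False
    then show ?thesis using r_less_before_kk[OF assms(1,2), of j] r_ge_two[OF assms(2), of j] that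
      by simp
  qed (use assms in simp)
  show ?thesis
  proof (cases "i < kk c")
    case True
    then show ?thesis using small assms(3) by fastforce
  next
    case False
    then obtain j where j: "i = Suc j" "1 \<le> j" "j < kk c"
      using kk_ge_two[OF assms(1,2)] assms(4) by (cases i) auto
    have "r j c ^ 2 \<le> (75/2)^2" using power_mono[OF small[OF j(2,3)] abs_ge_zero, of 2] by simp
    moreover have "2 \<le> r i c" using assms(2) j(1,2) by (intro r_ge_two) auto
    ultimately show ?thesis using j(1) assms(2) by (simp add: power2_eq_square)
  qed
qed

lemma r_less_before_escape:
  assumes "-3 < c" "-2 - \<delta> < c" "c < -2" "0 \<le> \<delta>" "36 \<le> 3^M * \<delta>"
    and "2 \<le> i" "i + M < kk c"
  shows "r i c < 2 + \<delta>"
proof (rule ccontr)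
  assume "\<not> r i c < 2 + \<delta>"
  then have "2 + 3^M * \<delta> \<le> r (i + M) c" using assms(2,4) by (intro r_escape) auto
  moreover have "r (i + M) c < 75/2" using assms by (intro r_less_before_kk) auto
  ultimately show False using assms(5) by simp
qed

lemma isCont_r: "isCont (r n) x"
proof (induction n)
  case (Suc n)
  have "r (Suc n) = (\<lambda>c. r n c ^ 2 + c)" by (rule ext) simp
  then show ?case using Suc by (auto intro!: continuous_intros)
qed simp

lemma abs_r_minus_two_le: "\<bar>r n (-2)\<bar> \<le> 2"
proof (induction n)
  case (Suc n)
  have "r n (-2) ^ 2 \<le> 2 ^ 2" using power_mono[OF Suc abs_ge_zero, of 2] by simp
  then show ?case using zero_le_power2[of "r n (-2)"] by (simp add: abs_le_iff)
qed simp

lemma filterlim_kk_at_left_minus_two: "filterlim kk at_top (at_left (-2))"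
  unfolding filterlim_at_top
proof
  fix N
  have "\<forall>\<^sub>F c in at_left (-2). r i c < 36" for i
  proof (rule order_tendstoD)
    show "(r i \<longlongrightarrow> r i (-2)) (at_left (-2))"
      by (rule tendsto_within_subset[OF isContD[OF isCont_r]]) simp
    show "r i (-2) < 36" using abs_r_minus_two_le[of i] by simp
  qed
  then have "\<forall>\<^sub>F c in at_left (-2). \<forall>i\<in>{..<N}. r i c < 36"
    by (intro eventually_ball_finite) auto
  moreover have "\<forall>\<^sub>F c in at_left (-2). c \<in> {-3<..<-2::real}"
    by (rule eventually_at_left_real) simp
  ultimately show "\<forall>\<^sub>F c in at_left (-2). N \<le> kk c"
  proof eventually_elim
    case (elim c)
    then show ?case using r_kk_ge[of c] by (meson greaterThanLessThan_iff lessThan_iff not_le not_less)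
  qed
qed

lemma ln_abs_prod_r_ge:
  assumes "c < -2"
  shows "real n * ln 2 \<le> ln \<bar>\<Prod>i\<in>{1..n}. r i c\<bar>"
proof -
  have "(\<Prod>i\<in>{1..n}. 2) \<le> (\<Prod>i\<in>{1..n}. \<bar>r i c\<bar>)"
    using abs_r_ge_two[OF assms] by (intro prod_mono) auto
  then have "2 ^ n \<le> \<bar>\<Prod>i\<in>{1..n}. r i c\<bar>" by (simp add: abs_prod)
  moreover have "(0::real) < 2 ^ n" by simp
  ultimately have "ln (2 ^ n) \<le> ln \<bar>\<Prod>i\<in>{1..n}. r i c\<bar>"
    by (metis less_le_trans ln_le_cancel_iff)
  then show ?thesis by (simp add: ln_realpow)
qed

lemma prod_le_pow_split:
  fixes f :: "'a \<Rightarrow> real"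
  assumes "finite I" "0 \<le> b" "\<And>i. i \<in> I \<Longrightarrow> 0 \<le> f i"
    and "\<And>i. i \<in> I - A \<Longrightarrow> f i \<le> a" "\<And>i. i \<in> I \<inter> A \<Longrightarrow> f i \<le> b"
  shows "prod f I \<le> b ^ card (I \<inter> A) * a ^ card (I - A)"
proof -
  have "prod f I = prod f (I \<inter> A) * prod f (I - A)" using assms(1) by (rule prod.Int_Diff)
  also have "\<dots> \<le> (\<Prod>i\<in>I \<inter> A. b) * (\<Prod>i\<in>I - A. a)"
    using assms by (intro mult_mono prod_mono prod_nonneg zero_le_power) auto
  finally show ?thesis by simp
qed

lemma ln_abs_prod_r_le:
  assumes "-3 < c" "-2 - \<delta> < c" "c < -2" "0 \<le> \<delta>" "36 \<le> 3^M * \<delta>"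
  shows "ln \<bar>\<Prod>i\<in>{1..kk c}. r i c\<bar> \<le> real (kk c) * ln (2 + \<delta>) + real (M + 2) * ln 1444"
proof -
  define k where "k = kk c"
  define A where "A = {1} \<union> {k - M..k}"
  have "(\<Prod>i\<in>{1..k}. \<bar>r i c\<bar>) \<le> 1444 ^ card ({1..k} \<inter> A) * (2 + \<delta>) ^ card ({1..k} - A)"
  proof (rule prod_le_pow_split)
    fix i assume "i \<in> {1..k} - A"
    then have "r i c < 2 + \<delta>" "2 \<le> r i c"
      using assms by (auto intro!: r_less_before_escape r_ge_two simp: A_def k_def)
    then show "\<bar>r i c\<bar> \<le> 2 + \<delta>" by simp
  qed (use abs_r_le_upto_kk[OF assms(1,3)] in \<open>auto simp: k_def\<close>)
  also have "\<dots> \<le> 1444 ^ (M + 2) * (2 + \<delta>) ^ k"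
  proof (intro mult_mono power_increasing)
    have "card ({1..k} \<inter> A) \<le> card {1::nat} + card {k - M..k}"
      unfolding A_def by (rule order_trans[OF card_mono card_Un_le]) auto
    then show "card ({1..k} \<inter> A) \<le> M + 2" by simp
    show "card ({1..k} - A) \<le> k" using card_mono[of "{1..k}" "{1..k} - A"] by auto
  qed (use assms(4) in auto)
  finally have "\<bar>\<Prod>i\<in>{1..k}. r i c\<bar> \<le> 1444 ^ (M + 2) * (2 + \<delta>) ^ k"
    by (simp add: abs_prod)
  moreover have "0 < \<bar>\<Prod>i\<in>{1..k}. r i c\<bar>"
    using abs_r_ge_two[OF assms(3)] by (force simp: abs_prod intro: prod_pos)
  ultimately have "ln \<bar>\<Prod>i\<in>{1..k}. r i c\<bar> \<le> ln (1444 ^ (M + 2) * (2 + \<delta>) ^ k)"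
    by (metis less_le_trans ln_le_cancel_iff)
  also have "\<dots> = ln (1444 ^ (M + 2)) + ln ((2 + \<delta>) ^ k)"
    using assms(4) by (intro ln_mult_pos) auto
  also have "\<dots> = real (M + 2) * ln 1444 + real k * ln (2 + \<delta>)"
    by (simp only: ln_realpow)
  finally show ?thesis by (simp add: k_def)
qed

lemma eventually_ln_abs_prod_r_div_kk_less:
  assumes "0 < \<delta>"
  shows "\<forall>\<^sub>F c in at_left (-2). ln \<bar>\<Prod>i\<in>{1..kk c}. r i c\<bar> / real (kk c) < ln (2 + \<delta>) + \<delta>"
proof -
  define d where "d = min \<delta> 1"
  have d: "0 < d" "d \<le> \<delta>" "d \<le> 1" using assms by (auto simp: d_def)
  obtain M :: nat where "36 / d < 3^M" using real_arch_pow[of 3] by auto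
  then have M: "36 \<le> 3^M * d" using d by (simp add: divide_less_eq)
  define C where "C = real (M + 2) * ln 1444"
  have "\<forall>\<^sub>F c in at_left (-2). c \<in> {-2 - d<..<-2::real}"
    using d by (intro eventually_at_left_real) simp
  moreover have "\<forall>\<^sub>F c in at_left (-2). C / \<delta> + 1 \<le> real (kk c)"
    using filterlim_compose[OF filterlim_real_sequentially filterlim_kk_at_left_minus_two]
    by (simp add: filterlim_at_top)
  ultimately show ?thesis
  proof eventually_elim
    case (elim c)
    define k where "k = real (kk c)"
    have "0 \<le> C / \<delta>" "C / \<delta> < k" using assms elim by (simp_all add: C_def k_def)
    then have k: "0 < k" "C < k * \<delta>" using assms by (linarith, simp add: pos_divide_less_eq)
    have "ln \<bar>\<Prod>i\<in>{1..kk c}. r i c\<bar> \<le> k * ln (2 + d) + C"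
      using elim d M unfolding k_def C_def by (intro ln_abs_prod_r_le) auto
    also have "\<dots> \<le> k * ln (2 + \<delta>) + C"
      using k d by (intro add_right_mono mult_left_mono) auto
    finally show ?case using k by (simp add: divide_less_eq algebra_simps k_def)
  qed
qed

theorem lemma1:
  shows "((\<lambda>c. ln \<bar>\<Prod>i\<in>{1..kk c}. r i c\<bar> / real (kk c)) \<longlongrightarrow> ln 2) (at_left (-2))"
proof (rule tendstoI)
  fix e :: real
  assume e: "0 < e"
  have "ln (2 + e/2) = ln (2 * (1 + e/4))" by simp
  also have "\<dots> = ln 2 + ln (1 + e/4)" using e by (intro ln_mult_pos) auto
  also have "ln (1 + e/4) \<le> e/4" using e by (intro ln_add_one_self_le_self) simp
  finally have ln_bound: "ln (2 + e/2) + e/2 < ln 2 + e" using e by simp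
  have "\<forall>\<^sub>F c in at_left (-2). c \<in> {-3<..<-2::real}"
    by (rule eventually_at_left_real) simp
  moreover have "\<forall>\<^sub>F c in at_left (-2). ln \<bar>\<Prod>i\<in>{1..kk c}. r i c\<bar> / real (kk c) < ln (2 + e/2) + e/2"
    using e by (intro eventually_ln_abs_prod_r_div_kk_less) simp
  ultimately show "\<forall>\<^sub>F c in at_left (-2). dist (ln \<bar>\<Prod>i\<in>{1..kk c}. r i c\<bar> / real (kk c)) (ln 2) < e"
  proof eventually_elim
    case (elim c)
    then have "ln 2 \<le> ln \<bar>\<Prod>i\<in>{1..kk c}. r i c\<bar> / real (kk c)"
      using ln_abs_prod_r_ge[of c "kk c"] kk_spec(1)[of c] by (simp add: le_divide_eq mult.commute)
    then show ?case using elim ln_bound by (simp add: dist_real_def)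
  qed
qed

end
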